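(* For every command $c$ of the While-language, store $\sigma$ and outcome $o$: if $(c,\sigma)\Downarrow^{co}o$ and not $(c,\sigma)\Downarrow o$, then $(c,\sigma)\Downarrow^{co}\mathsf{div}$.
   Context: While-language syntax: variables $x$ range over a countably infinite set $\mathit{Var}$; $n$ ranges over natural numbers; values are $v ::= \mathsf{null}\mid n$ ($\mathsf{null}$ distinct from every natural number); expressions are $e ::= v\mid x\mid e_1\oplus e_2$ with $\oplus\in\{+,-,*\}$, where $\oplus(n_1,n_2)$ is the result of the operation on naturals; commands are $c ::= \mathsf{skip}\mid\mathsf{alloc}\ x\mid x:=e\mid c_1;c_2\mid \mathsf{if}\ e\ c_1\ c_2\mid\mathsf{while}\ e\ c$. A store $\sigma$ is a finite partial map from $\mathit{Var}$ to values, with domain $\mathrm{dom}(\sigma)$, lookup $\sigma(x)$, update $\sigma[x\mapsto v]$. Expression evaluation $(e,\sigma)\Rightarrow_E v$ is the least relation with: $(v,\sigma)\Rightarrow_E v$; $(x,\sigma)\Rightarrow_E\sigma(x)$ if $x\in\mathrm{dom}(\sigma)$; if $(e_1,\sigma)\Rightarrow_E n_1$ and $(e_2,\sigma)\Rightarrow_E n_2$ with $n_1,n_2$ naturals then $(e_1\oplus e_2,\sigma)\Rightarrow_E\oplus(n_1,n_2)$. Pretty-big-step semantics: outcomes $o ::= \mathsf{conv}\ \sigma\mid\mathsf{div}$; semantic commands $C ::= c\mid\mathsf{assign2}\ x\ v\mid\mathsf{seq2}\ o\ c\mid\mathsf{if2}\ v\ c\ c\mid\mathsf{while2}\ v\ e\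 c\mid\mathsf{while3}\ o\ e\ c$. The rules for judgments $(C,\sigma)\Downarrow o$ are: $(\mathsf{skip},\sigma)\Downarrow\mathsf{conv}\ \sigma$; $(\mathsf{alloc}\ x,\sigma)\Downarrow\mathsf{conv}\ \sigma[x\mapsto\mathsf{null}]$ if $x\notin\mathrm{dom}(\sigma)$; $(x:=e,\sigma)\Downarrow o$ if $(e,\sigma)\Rightarrow_E v$ and $(\mathsf{assign2}\ x\ v,\sigma)\Downarrow o$; $(\mathsf{assign2}\ x\ v,\sigma)\Downarrow\mathsf{conv}\ \sigma[x\mapsto v]$ if $x\in\mathrm{dom}(\sigma)$; $(c_1;c_2,\sigma)\Downarrow o$ if $(c_1,\sigma)\Downarrow o_1$ and $(\mathsf{seq2}\ o_1\ c_2,\sigma)\Downarrow o$; $(\mathsf{seq2}\ (\mathsf{conv}\ \sigma)\ c,\sigma_0)\Downarrow o$ if $(c,\sigma)\Downarrow o$; $(\mathsf{if}\ e\ c_1\ c_2,\sigma)\Downarrow o$ if $(e,\sigma)\Rightarrow_E v$ and $(\mathsf{if2}\ v\ c_1\ c_2,\sigma)\Downarrow o$; $(\mathsf{if2}\ v\ c_1\ c_2,\sigma)\Downarrow o_1$ if $v\ne0$ and $(c_1,\sigma)\Downarrow o_1$; $(\mathsf{if2}\ 0\ c_1\ c_2,\sigma)\Downarrow o_2$ if $(c_2,\sigma)\Downarrow o_2$; $(\mathsf{while}\ e\ c,\sigma)\Downarrow o$ if $(e,\sigma)\Rightarrow_E v$ and $(\mathsf{while2}\ v\ e\ c,\sigma)\Downarrow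 o$; $(\mathsf{while2}\ v\ e\ c,\sigma)\Downarrow o'$ if $v\ne0$, $(c,\sigma)\Downarrow o$ and $(\mathsf{while3}\ o\ e\ c,\sigma)\Downarrow o'$; $(\mathsf{while2}\ 0\ e\ c,\sigma)\Downarrow\mathsf{conv}\ \sigma$; $(\mathsf{while3}\ (\mathsf{conv}\ \sigma)\ e\ c,\sigma_0)\Downarrow o$ if $(\mathsf{while}\ e\ c,\sigma)\Downarrow o$; $(\mathsf{seq2}\ \mathsf{div}\ c_2,\sigma)\Downarrow\mathsf{div}$; $(\mathsf{while3}\ \mathsf{div}\ e\ c,\sigma)\Downarrow\mathsf{div}$. $\Downarrow$ is the inductive interpretation (least relation closed under the rules); $\Downarrow^{co}$ is the coinductive interpretation of the same rules (greatest relation such that every element is the conclusion of a rule instance whose $\Downarrow$-premises lie in it; $\Rightarrow_E$ premises keep their meaning). *)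

theory Defs
  imports Main
begin

type_synonym var = nat

datatype val = Null | N nat

datatype binop = Plus | Minus | Times

datatype expr = V val | X var | Op binop expr expr

datatype cmd = Skip | Alloc var | Assign var expr | Seq cmd cmd
  | If expr cmd cmd | While expr cmd

(* stores: finite partial maps; finiteness of the domain is imposed where stores are quantified *)
type_synonym store = "var \<rightharpoonup> val"

fun apply_op :: "binop \<Rightarrow> nat \<Rightarrow> nat \<Rightarrow> nat" where
  "apply_op Plus a b = a + b"
| "apply_op Minus a b = a - b"
| "apply_op Times a b = a * b"

inductive eval :: "expr \<Rightarrow> store \<Rightarrow> val \<Rightarrow> bool" where
  eval_val: "eval (V v) \<sigma> v"
| eval_var: "\<sigma> x = Some v \<Longrightarrow> eval (X x) \<sigma> v"
| eval_op: "eval e1 \<sigma> (N n1) \<Longrightarrow> eval e2 \<sigma> (N n2) \<Longrightarrow> eval (Op f e1 e2) \<sigma> (N (apply_op f n1 n2))"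

datatype outcome = Conv store | Div

datatype scmd = C cmd | Assign2 var val | Seq2 outcome cmd | If2 val cmd cmd
  | While2 val expr cmd | While3 outcome expr cmd

inductive big :: "scmd \<Rightarrow> store \<Rightarrow> outcome \<Rightarrow> bool" where
  skip: "big (C Skip) \<sigma> (Conv \<sigma>)"
| alloc: "x \<notin> dom \<sigma> \<Longrightarrow> big (C (Alloc x)) \<sigma> (Conv (\<sigma>(x \<mapsto> Null)))"
| assign: "eval e \<sigma> v \<Longrightarrow> big (Assign2 x v) \<sigma> r \<Longrightarrow> big (C (Assign x e)) \<sigma> r"
| assign2: "x \<in> dom \<sigma> \<Longrightarrow> big (Assign2 x v) \<sigma> (Conv (\<sigma>(x \<mapsto> v)))"
| seq: "big (C c1) \<sigma> r1 \<Longrightarrow> big (Seq2 r1 c2) \<sigma> r \<Longrightarrow> big (C (Seq c1 c2)) \<sigma> r"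
| seq2: "big (C c) \<sigma> r \<Longrightarrow> big (Seq2 (Conv \<sigma>) c) \<sigma>0 r"
| if1: "eval e \<sigma> v \<Longrightarrow> big (If2 v c1 c2) \<sigma> r \<Longrightarrow> big (C (If e c1 c2)) \<sigma> r"
| if2_t: "v \<noteq> N 0 \<Longrightarrow> big (C c1) \<sigma> r1 \<Longrightarrow> big (If2 v c1 c2) \<sigma> r1"
| if2_f: "big (C c2) \<sigma> r2 \<Longrightarrow> big (If2 (N 0) c1 c2) \<sigma> r2"
| while: "eval e \<sigma> v \<Longrightarrow> big (While2 v e c) \<sigma> r \<Longrightarrow> big (C (While e c)) \<sigma> r"
| while2_t: "v \<noteq> N 0 \<Longrightarrow> big (C c) \<sigma> r \<Longrightarrow> big (While3 r e c) \<sigma> r' \<Longrightarrow> big (While2 v e c) \<sigma> r'"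
| while2_f: "big (While2 (N 0) e c) \<sigma> (Conv \<sigma>)"
| while3: "big (C (While e c)) \<sigma> r \<Longrightarrow> big (While3 (Conv \<sigma>) e c) \<sigma>0 r"
| seq2_div: "big (Seq2 Div c2) \<sigma> Div"
| while3_div: "big (While3 Div e c) \<sigma> Div"

coinductive cobig :: "scmd \<Rightarrow> store \<Rightarrow> outcome \<Rightarrow> bool" where
  skip: "cobig (C Skip) \<sigma> (Conv \<sigma>)"
| alloc: "x \<notin> dom \<sigma> \<Longrightarrow> cobig (C (Alloc x)) \<sigma> (Conv (\<sigma>(x \<mapsto> Null)))"
| assign: "eval e \<sigma> v \<Longrightarrow> cobig (Assign2 x v) \<sigma> r \<Longrightarrow> cobig (C (Assign x e)) \<sigma> r"
| assign2: "x \<in> dom \<sigma> \<Longrightarrow> cobig (Assign2 x v) \<sigma> (Conv (\<sigma>(x \<mapsto> v)))"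
| seq: "cobig (C c1) \<sigma> r1 \<Longrightarrow> cobig (Seq2 r1 c2) \<sigma> r \<Longrightarrow> cobig (C (Seq c1 c2)) \<sigma> r"
| seq2: "cobig (C c) \<sigma> r \<Longrightarrow> cobig (Seq2 (Conv \<sigma>) c) \<sigma>0 r"
| if1: "eval e \<sigma> v \<Longrightarrow> cobig (If2 v c1 c2) \<sigma> r \<Longrightarrow> cobig (C (If e c1 c2)) \<sigma> r"
| if2_t: "v \<noteq> N 0 \<Longrightarrow> cobig (C c1) \<sigma> r1 \<Longrightarrow> cobig (If2 v c1 c2) \<sigma> r1"
| if2_f: "cobig (C c2) \<sigma> r2 \<Longrightarrow> cobig (If2 (N 0) c1 c2) \<sigma> r2"
| while: "eval e \<sigma> v \<Longrightarrow> cobig (While2 v e c) \<sigma> r \<Longrightarrow> cobig (C (While e c)) \<sigma> r"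
| while2_t: "v \<noteq> N 0 \<Longrightarrow> cobig (C c) \<sigma> r \<Longrightarrow> cobig (While3 r e c) \<sigma> r' \<Longrightarrow> cobig (While2 v e c) \<sigma> r'"
| while2_f: "cobig (While2 (N 0) e c) \<sigma> (Conv \<sigma>)"
| while3: "cobig (C (While e c)) \<sigma> r \<Longrightarrow> cobig (While3 (Conv \<sigma>) e c) \<sigma>0 r"
| seq2_div: "cobig (Seq2 Div c2) \<sigma> Div"
| while3_div: "cobig (While3 Div e c) \<sigma> Div"

end

theory Submission
  imports Defs
begin

text \<open>
  A coinductive derivation whose outcome is not inductively derivable must contain an infinite
  branch. Only the rules for sequencing and for loop iteration can carry such a branch, through
  one of their two premises: if the first premise is inductively derivable, the non-derivability
  passes to the second one; otherwise the first premise itself is the culprit, and its outcome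
  may be replaced by \<open>Div\<close>, which the rules for \<open>Seq2 Div\<close> and \<open>While3 Div\<close> propagate.
\<close>

lemma cobig_not_big_imp_cobig_Div:
  assumes "cobig S \<sigma> out" and "\<not> big S \<sigma> out"
  shows "cobig S \<sigma> Div"
  using assms
proof (coinduction arbitrary: S \<sigma> out)
  case (cobig S \<sigma> out)
  note not_big = cobig(2)
  from cobig(1) show ?case
  proof cases
    case (seq c1 r1 c2)
    show ?thesis
    proof (cases "big (C c1) \<sigma> r1")
      case True
      with seq not_big have "\<not> big (Seq2 r1 c2) \<sigma> out"
        by (auto intro: big.seq)
      with seq show ?thesis by auto
    next
      case False
      with seq show ?thesis by (auto intro: cobig.seq2_div)
    qed
  next
    case (while2_t v c r e)
    show ?thesis
    proof (cases "big (C c) \<sigma> r")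
      case True
      with while2_t not_big have "\<not> big (While3 r e c) \<sigma> out"
        by (auto intro: big.while2_t)
      with while2_t show ?thesis by auto
    next
      case False
      with while2_t show ?thesis by (auto intro: cobig.while3_div)
    qed
  qed (use not_big in \<open>auto intro: big.intros\<close>)
qed

theorem lemma14:
  fixes c :: cmd and \<sigma> :: store and out :: outcome
  assumes "finite (dom \<sigma>)"
    and "cobig (C c) \<sigma> out"
    and "\<not> big (C c) \<sigma> out"
  shows "cobig (C c) \<sigma> Div"
  using cobig_not_big_imp_cobig_Div assms(2,3) .

end
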